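(* There is a function $\delta$ on the primes with $\delta(p)\to 0$ as $p\to\infty$ such that for every prime $p$ with $p\equiv 1\pmod 4$ there exists a real circulant orthogonal $p\times p$ matrix $M=(m_{i,j})$ with $(1-\delta(p))\frac{1}{\sqrt{p}}\le |m_{i,j}|\le (1+\delta(p))\frac{1}{\sqrt{p}}$ for all $i,j$ (i.e. all entries have modulus $(1+o(1))\frac{1}{\sqrt{p}}$).
   Context: A matrix $M=(m_{i,j})_{i,j\in\mathbb{Z}_p}$ is circulant if $m_{i,j}$ depends only on $j-i \bmod p$. *)

theory Defs
  imports "HOL-Computational_Algebra.Primes" Complex_Main
begin

text \<open>A p x p real matrix with rows/columns indexed by Z_p = {0..<p},
  represented as a function nat => nat => real (only entries i,j < p matter).\<close>

definition circulant :: "nat \<Rightarrow> (nat \<Rightarrow> nat \<Rightarrow> real) \<Rightarrow> bool" where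
  "circulant p m \<longleftrightarrow>
     (\<forall>i<p. \<forall>j<p. \<forall>i'<p. \<forall>j'<p.
        (j + p - i) mod p = (j' + p - i') mod p \<longrightarrow> m i j = m i' j')"

definition orthogonal_mat :: "nat \<Rightarrow> (nat \<Rightarrow> nat \<Rightarrow> real) \<Rightarrow> bool" where
  "orthogonal_mat p m \<longleftrightarrow>
     (\<forall>i<p. \<forall>j<p. (\<Sum>k<p. m k i * m k j) = (if i = j then 1 else 0))"

end

theory Submission
  imports Defs "HOL-Number_Theory.Number_Theory" "HOL-Probability.Characteristic_Functions"
begin

(* Every spectrum lam on Z_p with |lam l| = 1 and lam (-l) = cnj (lam l) is the spectrum of a real
   orthogonal circulant matrix, whose entries are c_k = (1/p) * sum_l lam l * e(lk/p).
   Take lam 0 = 1 and lam l = s * chi l * exp (i * beta * y l) for l <> 0, where chi is the Legendre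
   symbol, s = +-1 the sign of its Gauss sum (real because p = 1 mod 4), y a real odd function built
   from characters and beta = sqrt 8 * p^(-1/4). Expanding the phase to second order, p * c_k equals
   chi k * sqrt p (resp. s * sqrt p for k = 0) up to O(p^(1/4)): the zeroth-order term is a Gauss sum,
   the first-order term a combination of Gauss sums of non-principal characters, of size
   O(beta * sqrt p); the second-order term contains the principal character with weight -1/4, which
   contributes beta^2 (p - 1) / 8 ~ sqrt p exactly at k = 0 and O(beta^2 sqrt p) elsewhere; the Taylor
   remainder is O(p * beta^3). *)

section \<open>Roots of unity and the discrete Fourier transform\<close>

lemma cis_add_2pi_int: "cis (x + 2 * pi * of_int t) = cis x"
  by (simp add: cis_mult [symmetric, of x] del: cis_mult)

lemma cis_nat_mod:
  assumes "N > 0"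
  shows "cis (2 * pi * of_int r * real (x mod N) / real N) = cis (2 * pi * of_int r * real x / real N)"
proof -
  have "real x = real (x mod N) + real N * real (x div N)"
    by (metis mod_mult_div_eq of_nat_add of_nat_mult)
  then have "2 * pi * of_int r * real x / real N
      = 2 * pi * of_int r * real (x mod N) / real N + 2 * pi * of_int (r * int (x div N))"
    using assms by (simp add: field_simps)
  then show ?thesis by (simp only: cis_add_2pi_int)
qed

lemma cis_pi_int: "cis (pi * of_int r) = (if even r then 1 else - 1)"
proof (cases "even r")
  case True
  then obtain t where "pi * of_int r = 0 + 2 * pi * of_int t"
    by (auto elim: evenE)
  then show ?thesis using True by (simp only: cis_add_2pi_int) simp
next
  case False
  then obtain t where "pi * of_int r = pi + 2 * pi * of_int t"
    by (auto elim!: oddE simp: algebra_simps)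
  then show ?thesis using False by (simp only: cis_add_2pi_int) (simp add: complex_eq_iff)
qed

lemma sum_cis_multiples:
  fixes m :: int
  assumes "N > 0"
  shows "(\<Sum>k<N. cis (2 * pi * of_int m * real k / real N))
         = (if int N dvd m then of_nat N else 0)"
proof (cases "int N dvd m")
  case True
  then obtain t where m: "m = int N * t" by (auto elim: dvdE)
  have "cis (2 * pi * of_int m * real k / real N) = 1" for k
  proof -
    have "2 * pi * of_int m * real k / real N = 2 * pi * of_int (t * int k)"
      using assms by (simp add: m field_simps)
    then show ?thesis by simp
  qed
  with True show ?thesis by simp
next
  case False
  define z where "z = cis (2 * pi * of_int m / real N)"
  have "z \<noteq> 1"
  proof
    assume "z = 1"
    then have "cos (2 * pi * of_int m / real N) = 1" by (simp add: z_def complex_eq_iff)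
    then obtain t :: int where "2 * pi * of_int m / real N = of_int t * 2 * pi"
      by (auto simp: cos_one_2pi_int)
    then have "of_int m = real N * of_int t" using assms by (simp add: field_simps)
    then have "m = int N * t" by (metis of_int_eq_iff of_int_mult of_int_of_nat_eq)
    with False show False by simp
  qed
  have "(\<Sum>k<N. cis (2 * pi * of_int m * real k / real N)) = (\<Sum>k<N. z ^ k)"
    by (intro sum.cong refl) (simp add: z_def Complex.DeMoivre mult_ac)
  also have "\<dots> = (z ^ N - 1) / (z - 1)" using \<open>z \<noteq> 1\<close> by (simp add: geometric_sum)
  also have "z ^ N = 1" using assms by (simp add: z_def Complex.DeMoivre)
  finally show ?thesis using False by simp
qed

lemma norm_cis_minus_taylor_2: "norm (cis x - (1 + \<i> * of_real x - (of_real x)\<^sup>2 / 2)) \<le> \<bar>x\<bar> ^ 3 / 6"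
proof -
  have "(\<Sum>k\<le>2. (\<i> * complex_of_real x) ^ k / fact k) = 1 + \<i> * of_real x - (of_real x)\<^sup>2 / 2"
    by (simp add: numeral_2_eq_2 power2_eq_square algebra_simps)
  moreover have "cis x = iexp x"
    by (simp add: cis_conv_exp)
  ultimately show ?thesis
    using iexp_approx1 [of x 2] by (simp add: numeral_3_eq_3)
qed

lemma sum_lessThan_eq_0_plus:
  fixes f :: "nat \<Rightarrow> 'a :: comm_monoid_add"
  assumes "n > 0"
  shows "(\<Sum>j<n. f j) = f 0 + (\<Sum>j\<in>{0<..<n}. f j)"
proof -
  have "{..<n} = insert 0 {0<..<n}" using assms by auto
  then show ?thesis by simp
qed

definition add_char :: "nat \<Rightarrow> int \<Rightarrow> complex" where
  "add_char p x = cis (2 * pi * of_int x / real p)"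

lemma add_char_add: "add_char p (x + y) = add_char p x * add_char p y"
  by (simp add: add_char_def cis_mult add_divide_distrib distrib_left)

lemma norm_add_char [simp]: "norm (add_char p x) = 1"
  by (simp add: add_char_def)

lemma cnj_add_char: "cnj (add_char p x) = add_char p (- x)"
  by (simp add: add_char_def cis_cnj)

lemma add_char_0 [simp]: "add_char p 0 = 1"
  by (simp add: add_char_def)

lemma add_char_mod:
  assumes "p > 0"
  shows "add_char p (x mod int p) = add_char p x"
proof -
  have "real_of_int x = of_int (x mod int p) + real p * of_int (x div int p)"
    by (metis of_int_add of_int_mult of_int_of_nat_eq mod_mult_div_eq add.commute mult.commute)
  then have "2 * pi * of_int x / real p
      = 2 * pi * of_int (x mod int p) / real p + 2 * pi * of_int (x div int p)"
    using assms by (simp add: field_simps)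
  then show ?thesis
    by (simp add: add_char_def cis_add_2pi_int)
qed

lemma add_char_cong:
  assumes "p > 0" and "a mod int p = b mod int p"
  shows "add_char p a = add_char p b"
  by (metis add_char_mod assms)

lemma sum_add_char:
  assumes "p > 0"
  shows "(\<Sum>k<p. add_char p (m * int k)) = (if int p dvd m then of_nat p else 0)"
  using sum_cis_multiples [OF assms, of m] by (simp add: add_char_def mult_ac)

lemma int_dvd_diff_iff_eq:
  assumes "i < p" and "j < p"
  shows "int p dvd (int j - int i) \<longleftrightarrow> i = j"
  using assms by (auto simp: mod_eq_dvd_iff [symmetric] zmod_int)

lemma neg_mod_int:
  assumes "l \<le> p"
  shows "int ((p - l) mod p) mod int p = (- int l) mod int p"
proof -
  have "int ((p - l) mod p) mod int p = (- int l + int p * 1) mod int p"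
    using assms by (simp add: zmod_int of_nat_diff)
  then show ?thesis by (simp only: mod_mult_self2)
qed

lemma neg_mod_involutive:
  fixes p :: nat
  assumes "a < p"
  shows "(p - (p - a) mod p) mod p = a"
  using assms by (cases "a = 0") simp_all

lemma bij_betw_neg_mod:
  fixes p :: nat
  assumes "p > 0"
  shows "bij_betw (\<lambda>l. (p - l) mod p) {..<p} {..<p}"
  by (rule bij_betw_byWitness [where f' = "\<lambda>l. (p - l) mod p"])
    (use assms in \<open>auto simp: neg_mod_involutive\<close>)

definition dft :: "nat \<Rightarrow> (nat \<Rightarrow> complex) \<Rightarrow> nat \<Rightarrow> complex" where
  "dft p a k = (\<Sum>j<p. a j * add_char p (int j * int k))"

lemma dft_mod:
  assumes "p > 0"
  shows "dft p a (k mod p) = dft p a k"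
  unfolding dft_def
  by (intro sum.cong refl arg_cong2 [where f = "(*)"] add_char_cong [OF assms])
    (simp add: zmod_int mod_mult_right_eq)

lemma dft_add: "dft p (\<lambda>l. a l + b l) k = dft p a k + dft p b k"
  by (simp add: dft_def distrib_right sum.distrib)

lemma dft_diff: "dft p (\<lambda>l. a l - b l) k = dft p a k - dft p b k"
  by (simp add: dft_def left_diff_distrib sum_subtractf)

lemma dft_uminus: "dft p (\<lambda>l. - a l) k = - dft p a k"
  by (simp add: dft_def sum_negf)

lemma dft_cmult: "dft p (\<lambda>l. c * a l) k = c * dft p a k"
  by (simp add: dft_def sum_distrib_left mult.assoc)

lemma dft_divide: "dft p (\<lambda>l. a l / c) k = dft p a k / c"
  by (simp add: dft_def sum_divide_distrib)

lemma norm_dft_le: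
  assumes "\<And>l. l < p \<Longrightarrow> norm (a l) \<le> B"
  shows "norm (dft p a k) \<le> real p * B"
proof -
  have "norm (dft p a k) \<le> (\<Sum>l<p. norm (a l * add_char p (int l * int k)))"
    unfolding dft_def by (rule norm_sum)
  also have "\<dots> \<le> (\<Sum>l<p. B)"
    using assms by (intro sum_mono) (simp add: norm_mult)
  finally show ?thesis by simp
qed

lemma dft_inner:
  assumes "p > 0"
  shows "(\<Sum>k<p. dft p a k * cnj (dft p b k)) = of_nat p * (\<Sum>j<p. a j * cnj (b j))"
proof -
  have product: "dft p a k * cnj (dft p b k)
      = (\<Sum>j<p. \<Sum>j'<p. a j * cnj (b j') * add_char p ((int j - int j') * int k))" for k
  proof -
    have "add_char p ((int j - int j') * int k)
        = add_char p (int j * int k) * add_char p (- (int j' * int k))" for j j'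
      by (simp add: add_char_add [symmetric] algebra_simps)
    then show ?thesis by (simp add: dft_def sum_product cnj_add_char mult_ac)
  qed
  have "(\<Sum>k<p. dft p a k * cnj (dft p b k))
      = (\<Sum>k<p. \<Sum>j<p. \<Sum>j'<p. a j * cnj (b j') * add_char p ((int j - int j') * int k))"
    by (simp only: product)
  also have "\<dots> = (\<Sum>j<p. \<Sum>j'<p. \<Sum>k<p. a j * cnj (b j') * add_char p ((int j - int j') * int k))"
    by (subst sum.swap) (rule sum.cong [OF refl], rule sum.swap)
  also have "\<dots> = (\<Sum>j<p. \<Sum>j'<p. a j * cnj (b j') * (\<Sum>k<p. add_char p ((int j - int j') * int k)))"
    by (simp add: sum_distrib_left)
  also have "\<dots> = (\<Sum>j<p. \<Sum>j'<p. if j' = j then a j * cnj (b j) * of_nat p else 0)"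
    by (intro sum.cong refl) (simp add: sum_add_char [OF assms] int_dvd_diff_iff_eq)
  finally show ?thesis by (simp add: sum_distrib_left mult_ac)
qed

definition conj_symmetric :: "nat \<Rightarrow> (nat \<Rightarrow> complex) \<Rightarrow> bool" where
  "conj_symmetric p lam \<longleftrightarrow> (\<forall>l<p. lam ((p - l) mod p) = cnj (lam l))"

lemma dft_real_if_conj_symmetric:
  assumes "p > 0" and "conj_symmetric p lam"
  shows "cnj (dft p lam k) = dft p lam k"
proof -
  have "cnj (dft p lam k) = (\<Sum>l<p. lam ((p - l) mod p) * add_char p (int ((p - l) mod p) * int k))"
    unfolding dft_def cnj_sum
  proof (intro sum.cong refl)
    fix l assume "l \<in> {..<p}"
    then have "add_char p (int ((p - l) mod p) * int k) = add_char p (- int l * int k)"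
      by (intro add_char_cong [OF assms(1)])
        (metis mod_mult_left_eq neg_mod_int lessThan_iff less_imp_le)
    then show "cnj (lam l * add_char p (int l * int k))
        = lam ((p - l) mod p) * add_char p (int ((p - l) mod p) * int k)"
      using assms(2) \<open>l \<in> {..<p}\<close> by (simp add: conj_symmetric_def cnj_add_char)
  qed
  also have "\<dots> = dft p lam k"
    using sum.reindex_bij_betw [OF bij_betw_neg_mod [OF assms(1)], of "\<lambda>l. lam l * add_char p (int l * int k)"]
    by (simp add: dft_def)
  finally show ?thesis .
qed

section \<open>Real circulant matrices with prescribed spectrum\<close>

(* Taking the real part loses nothing for conjugate-symmetric lam, whose DFT is real. *)
definition spectral_circulant :: "nat \<Rightarrow> (nat \<Rightarrow> complex) \<Rightarrow> nat \<Rightarrow> nat \<Rightarrow> real" where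
  "spectral_circulant p lam i j = Re (dft p lam ((j + p - i) mod p)) / real p"

lemma circulant_spectral_circulant: "circulant p (spectral_circulant p lam)"
  unfolding circulant_def spectral_circulant_def by auto

lemma abs_spectral_circulant:
  assumes "p > 0" and "conj_symmetric p lam"
  shows "\<bar>spectral_circulant p lam i j\<bar> = norm (dft p lam ((j + p - i) mod p)) / real p"
proof -
  have "Im (dft p lam ((j + p - i) mod p)) = 0"
    using dft_real_if_conj_symmetric [OF assms] by (simp add: complex_eq_iff)
  then show ?thesis by (simp add: spectral_circulant_def cmod_eq_Re)
qed

lemma dft_shift:
  assumes "p > 0" and "k < p"
  shows "dft p lam ((i + p - k) mod p)
         = cnj (dft p (\<lambda>l. cnj (lam l * add_char p (int l * int i))) k)"
proof -
  have "add_char p (int l * int ((i + p - k) mod p))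
      = add_char p (int l * int i) * add_char p (- (int l * int k))" for l
  proof -
    have "int (i + p - k) = (int i - int k) + int p"
      using assms(2) by simp
    then have "int ((i + p - k) mod p) mod int p = (int i - int k) mod int p"
      by (simp add: zmod_int)
    then have "add_char p (int l * int ((i + p - k) mod p)) = add_char p (int l * (int i - int k))"
      by (intro add_char_cong [OF assms(1)]) (metis mod_mult_right_eq)
    then show ?thesis by (simp add: add_char_add [symmetric] algebra_simps)
  qed
  then show ?thesis by (simp add: dft_def cnj_add_char mult_ac)
qed

lemma unimodular_mult_cnj:
  fixes z :: complex
  assumes "norm z = 1"
  shows "cnj z * z = 1"
  using complex_norm_square [of z] assms by (simp add: mult.commute)

lemma dft_shift_autocorrelation:
  assumes "p > 0" and "i < p" and "j < p"
    and unimodular: "\<And>l. l < p \<Longrightarrow> norm (lam l) = 1"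
  shows "(\<Sum>k<p. dft p lam ((i + p - k) mod p) * cnj (dft p lam ((j + p - k) mod p)))
         = (if i = j then of_nat p * of_nat p else 0)"
proof -
  define a where "a = (\<lambda>l. cnj (lam l * add_char p (int l * int i)))"
  define b where "b = (\<lambda>l. cnj (lam l * add_char p (int l * int j)))"
  have "(\<Sum>k<p. dft p lam ((i + p - k) mod p) * cnj (dft p lam ((j + p - k) mod p)))
      = cnj (\<Sum>k<p. dft p a k * cnj (dft p b k))"
    by (simp add: dft_shift [OF assms(1)] a_def b_def)
  also have "\<dots> = cnj (of_nat p * (\<Sum>l<p. add_char p ((int j - int i) * int l)))"
  proof -
    have "a l * cnj (b l) = add_char p ((int j - int i) * int l)" if "l < p" for l
      using unimodular_mult_cnj [OF unimodular [OF that]]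
      by (simp add: a_def b_def cnj_add_char mult_ac flip: add_char_add) (simp add: algebra_simps)
    then show ?thesis by (simp add: dft_inner [OF assms(1)])
  qed
  also have "\<dots> = (if i = j then of_nat p * of_nat p else 0)"
    using assms(1-3) by (simp add: sum_add_char int_dvd_diff_iff_eq)
  finally show ?thesis .
qed

lemma orthogonal_mat_spectral_circulant:
  assumes "p > 0"
    and unimodular: "\<And>l. l < p \<Longrightarrow> norm (lam l) = 1"
    and "conj_symmetric p lam"
  shows "orthogonal_mat p (spectral_circulant p lam)"
  unfolding orthogonal_mat_def
proof (intro allI impI)
  fix i j assume "i < p" and "j < p"
  have cnj_dft: "cnj (dft p lam k) = dft p lam k" for k
    by (rule dft_real_if_conj_symmetric [OF assms(1,3)])
  then have real_dft: "complex_of_real (Re (dft p lam k)) = dft p lam k" for k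
    by (simp add: complex_eq_iff)
  have "complex_of_real (spectral_circulant p lam k i * spectral_circulant p lam k j)
      = dft p lam ((i + p - k) mod p) * cnj (dft p lam ((j + p - k) mod p)) / (of_nat p * of_nat p)"
    for k
    unfolding spectral_circulant_def of_real_mult of_real_divide real_dft cnj_dft by simp
  then have "complex_of_real (\<Sum>k<p. spectral_circulant p lam k i * spectral_circulant p lam k j)
      = (\<Sum>k<p. dft p lam ((i + p - k) mod p) * cnj (dft p lam ((j + p - k) mod p)))
        / (of_nat p * of_nat p)"
    by (simp add: sum_divide_distrib)
  also have "\<dots> = (if i = j then 1 else 0)"
    using assms(1) by (simp add: dft_shift_autocorrelation [OF assms(1) \<open>i < p\<close> \<open>j < p\<close> unimodular])
  finally show "(\<Sum>k<p. spectral_circulant p lam k i * spectral_circulant p lam k j)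
      = (if i = j then 1 else 0)"
    by (metis of_real_0 of_real_1 of_real_eq_iff)
qed

lemma abs_spectral_circulant_const_1_le:
  assumes "p > 0"
  shows "\<bar>spectral_circulant p (\<lambda>_. 1) i j\<bar> \<le> 1"
proof -
  have "conj_symmetric p (\<lambda>_. 1)"
    by (simp add: conj_symmetric_def)
  moreover have "norm (dft p (\<lambda>_. 1) k) \<le> real p * 1" for k
    by (rule norm_dft_le) simp
  ultimately show ?thesis
    using assms by (simp add: abs_spectral_circulant divide_le_eq)
qed

section \<open>Characters modulo a prime and Gauss sums\<close>

locale prime_primroot =
  fixes p g :: nat
  assumes prime: "prime p" and primroot: "residue_primroot p g"
begin

lemma p_gt_1: "p > 1"
  using prime prime_gt_1_nat by blast

lemma p_pos: "p > 0"
  using p_gt_1 by simp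

lemma coprime_g: "coprime p g"
  using primroot by (simp add: residue_primroot_def)

lemma ord_g: "ord p g = p - 1"
  using primroot prime by (simp add: residue_primroot_def totient_prime)

lemma g_power_cong_iff: "[g ^ d = g ^ e] (mod p) \<longleftrightarrow> [d = e] (mod (p - 1))"
  using order_divides_expdiff [OF coprime_g] by (simp add: ord_g)

lemma bij_betw_g_power: "bij_betw (\<lambda>i. g ^ i mod p) {..<p - 1} {0<..<p}"
  using residue_primroot_is_generator [OF p_gt_1 primroot] prime
  by (simp add: totient_prime totatives_prime)

definition dlog :: "nat \<Rightarrow> nat" where
  "dlog j = the_inv_into {..<p - 1} (\<lambda>i. g ^ i mod p) (j mod p)"

lemma dlog_mod: "dlog (j mod p) = dlog j"
  by (simp add: dlog_def)

lemma inj_on_g_power: "inj_on (\<lambda>i. g ^ i mod p) {..<p - 1}"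
  using bij_betw_g_power by (simp add: bij_betw_def)

lemma dlog_in_range:
  assumes "j mod p \<noteq> 0"
  shows "j mod p \<in> (\<lambda>i. g ^ i mod p) ` {..<p - 1}"
  using bij_betw_g_power assms p_pos by (simp add: bij_betw_def)

lemma g_power_dlog:
  assumes "j mod p \<noteq> 0"
  shows "g ^ dlog j mod p = j mod p"
  unfolding dlog_def using f_the_inv_into_f [OF inj_on_g_power dlog_in_range [OF assms]] .

lemma dlog_less:
  assumes "j mod p \<noteq> 0"
  shows "dlog j < p - 1"
  unfolding dlog_def using the_inv_into_into [OF inj_on_g_power dlog_in_range [OF assms]] by blast

lemma dlog_eqI:
  assumes "a < p - 1" and "g ^ a mod p = j mod p"
  shows "dlog j = a"
  unfolding dlog_def using assms the_inv_into_f_eq [OF inj_on_g_power] by (metis lessThan_iff)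

lemma dlog_mult:
  assumes "j mod p \<noteq> 0" and "k mod p \<noteq> 0"
  shows "dlog (j * k) = (dlog j + dlog k) mod (p - 1)"
proof (rule dlog_eqI)
  show "(dlog j + dlog k) mod (p - 1) < p - 1"
    using p_gt_1 by simp
  have "[g ^ ((dlog j + dlog k) mod (p - 1)) = g ^ (dlog j + dlog k)] (mod p)"
    by (subst g_power_cong_iff) (simp add: Cong.cong_def)
  also have "[g ^ (dlog j + dlog k) = (g ^ dlog j mod p) * (g ^ dlog k mod p)] (mod p)"
    unfolding power_add by (intro cong_mult) (simp_all add: Cong.cong_def)
  also have "(g ^ dlog j mod p) * (g ^ dlog k mod p) = (j mod p) * (k mod p)"
    using assms by (simp add: g_power_dlog)
  also have "[(j mod p) * (k mod p) = j * k] (mod p)"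
    by (simp add: Cong.cong_def mod_mult_eq)
  finally show "g ^ ((dlog j + dlog k) mod (p - 1)) mod p = j * k mod p"
    by (simp add: Cong.cong_def)
qed

lemma dlog_minus_one:
  assumes "p > 2"
  shows "2 * dlog (p - 1) = p - 1"
proof -
  define d where "d = dlog (p - 1)"
  have "g ^ d mod p = p - 1"
    using g_power_dlog [of "p - 1"] p_gt_1 by (simp add: d_def)
  then have g_d: "[g ^ d = p - 1] (mod p)"
    using p_gt_1 by (simp add: Cong.cong_def)
  have "[g ^ d * g ^ d = (p - 1) * (p - 1)] (mod p)"
    by (rule cong_mult [OF g_d g_d])
  then have "[g ^ (2 * d) = (p - 1) * (p - 1)] (mod p)"
    by (simp add: mult_2 power_add)
  moreover have "[(p - 1) * (p - 1) = g ^ 0] (mod p)"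
  proof -
    have "(p - 1) * (p - 1) = 1 + (p - 2) * p"
      using p_gt_1 by (cases p) (auto simp: algebra_simps)
    then show ?thesis by (simp only: Cong.cong_def mod_mult_self1 power_0)
  qed
  ultimately have "[2 * d = 0] (mod (p - 1))"
    using g_power_cong_iff cong_trans by blast
  then obtain t where t: "2 * d = (p - 1) * t"
    by (auto simp: cong_0_iff elim: dvdE)
  have "d < p - 1"
    unfolding d_def using p_gt_1 by (intro dlog_less) simp
  then have "(p - 1) * t < (p - 1) * 2"
    using t by linarith
  moreover have "t \<noteq> 0"
  proof
    assume "t = 0"
    then show False using t \<open>g ^ d mod p = p - 1\<close> assms by simp
  qed
  ultimately have "t = 1"
    by (simp add: less_2_cases_iff)
  with t show ?thesis by (simp add: d_def)
qed

(* The r-th power of the character sending g to exp (2 pi i / (p - 1));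
   mult_char ((p - 1) div 2) is the Legendre symbol. *)
definition mult_char :: "int \<Rightarrow> nat \<Rightarrow> complex" where
  "mult_char r j =
     (if j mod p = 0 then 0 else cis (2 * pi * of_int r * of_nat (dlog j) / real (p - 1)))"

lemma mult_char_mod: "mult_char r (j mod p) = mult_char r j"
  by (simp add: mult_char_def dlog_mod)

lemma mult_char_eq_0: "j mod p = 0 \<Longrightarrow> mult_char r j = 0"
  by (simp add: mult_char_def)

lemma norm_mult_char: "j mod p \<noteq> 0 \<Longrightarrow> norm (mult_char r j) = 1"
  by (simp add: mult_char_def)

lemma norm_mult_char_le: "norm (mult_char r j) \<le> 1"
  by (simp add: mult_char_def)

lemma cnj_mult_char: "cnj (mult_char r j) = mult_char (- r) j"
  by (simp add: mult_char_def cis_cnj)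

lemma mult_char_0_index: "mult_char 0 j = (if j mod p = 0 then 0 else 1)"
  by (simp add: mult_char_def)

lemma mult_char_mult_index: "mult_char a j * mult_char b j = mult_char (a + b) j"
  by (simp add: mult_char_def cis_mult add_divide_distrib distrib_left distrib_right)

lemma mult_char_index_cong:
  assumes "int (p - 1) dvd a - b"
  shows "mult_char a j = mult_char b j"
proof -
  obtain t where t: "a = b + int (p - 1) * t"
    using assms by (metis add_diff_cancel_left' add_diff_eq dvdE)
  have "2 * pi * of_int a * of_nat (dlog j) / real (p - 1)
      = 2 * pi * of_int b * of_nat (dlog j) / real (p - 1) + 2 * pi * of_int (t * int (dlog j))"
    using p_gt_1 by (simp add: t field_simps)
  then show ?thesis by (simp only: mult_char_def cis_add_2pi_int)
qed

lemma mult_char_mult: "mult_char r (j * k) = mult_char r j * mult_char r k"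
proof (cases "j mod p = 0 \<or> k mod p = 0")
  case True
  then have "(j * k) mod p = 0" by (auto simp: mod_eq_0_iff_dvd)
  with True show ?thesis by (auto simp: mult_char_def)
next
  case False
  then have "(j * k) mod p \<noteq> 0"
    using prime by (auto simp: prime_dvd_mult_iff mod_eq_0_iff_dvd)
  moreover have "dlog (j * k) = (dlog j + dlog k) mod (p - 1)"
    using False by (simp add: dlog_mult)
  ultimately have "mult_char r (j * k) = cis (2 * pi * of_int r * real (dlog j + dlog k) / real (p - 1))"
    using p_gt_1 cis_nat_mod [of "p - 1" r] by (simp add: mult_char_def)
  then show ?thesis using False
    by (simp add: mult_char_def cis_mult distrib_left add_divide_distrib)
qed

lemma sum_mult_char:
  "(\<Sum>j<p. mult_char r j) = (if int (p - 1) dvd r then of_nat (p - 1) else 0)"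
proof -
  have "(\<Sum>j<p. mult_char r j) = (\<Sum>j\<in>{0<..<p}. mult_char r j)"
    using sum_lessThan_eq_0_plus [OF p_pos, of "mult_char r"] by (simp add: mult_char_eq_0)
  also have "\<dots> = (\<Sum>a<p - 1. mult_char r (g ^ a mod p))"
    using sum.reindex_bij_betw [OF bij_betw_g_power, of "mult_char r"] by simp
  also have "\<dots> = (\<Sum>a<p - 1. cis (2 * pi * of_int r * real a / real (p - 1)))"
  proof (intro sum.cong refl)
    fix a assume a: "a \<in> {..<p - 1}"
    then have "g ^ a mod p \<in> {0<..<p}"
      using bij_betw_g_power by (auto simp: bij_betw_def)
    moreover have "dlog (g ^ a mod p) = a"
      using a by (intro dlog_eqI) auto
    ultimately show "mult_char r (g ^ a mod p) = cis (2 * pi * of_int r * real a / real (p - 1))"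
      by (simp add: mult_char_def)
  qed
  also have "\<dots> = (if int (p - 1) dvd r then of_nat (p - 1) else 0)"
    by (rule sum_cis_multiples) (use p_gt_1 in simp)
  finally show ?thesis .
qed

lemma mult_char_minus_one:
  assumes "p > 2"
  shows "mult_char r (p - 1) = (if even r then 1 else - 1)"
proof -
  have "real (p - 1) = real (2 * dlog (p - 1))"
    by (simp only: dlog_minus_one [OF assms])
  then have "2 * pi * of_int r * of_nat (dlog (p - 1)) / real (p - 1) = pi * of_int r"
    using assms by simp
  then show ?thesis
    using p_gt_1 by (simp add: mult_char_def cis_pi_int)
qed

lemma mult_char_neg:
  assumes "l \<le> p"
  shows "mult_char r ((p - l) mod p) = mult_char r (p - 1) * mult_char r l"
proof -
  have "int ((p - 1) * l) = - int l + int p * int l"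
    using p_gt_1 by (simp add: of_nat_diff algebra_simps)
  then have "int ((p - 1) * l) mod int p = (- int l) mod int p"
    by (simp only: mod_mult_self2)
  then have "int (((p - 1) * l) mod p) = int ((p - l) mod p)"
    using neg_mod_int [OF assms] by (simp add: zmod_int)
  then show ?thesis
    by (metis of_nat_eq_iff mult_char_mod mult_char_mult)
qed

lemma mult_char_mult_cnj: "j mod p \<noteq> 0 \<Longrightarrow> mult_char r j * cnj (mult_char r j) = 1"
  by (simp add: cnj_mult_char mult_char_mult_index mult_char_0_index)

lemma bij_betw_mult_mod:
  assumes "k mod p \<noteq> 0"
  shows "bij_betw (\<lambda>j. (j * k) mod p) {..<p} {..<p}"
proof -
  have "coprime k p"
    using assms prime by (metis mod_eq_0_iff_dvd coprime_commute prime_imp_coprime)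
  then have "inj_on (\<lambda>j. (j * k) mod p) {..<p}"
    by (intro inj_onI) (auto simp: Cong.cong_def [symmetric] cong_mult_rcancel_nat cong_less_modulus_unique_nat)
  moreover have "(\<lambda>j. (j * k) mod p) ` {..<p} \<subseteq> {..<p}"
    using p_pos by auto
  ultimately show ?thesis
    by (simp add: bij_betw_def endo_inj_surj)
qed

lemma gauss_sum_scale:
  assumes "k mod p \<noteq> 0"
  shows "dft p (mult_char r) 1 = mult_char r k * dft p (mult_char r) k"
proof -
  have "dft p (mult_char r) 1 = (\<Sum>j<p. mult_char r ((j * k) mod p) * add_char p (int ((j * k) mod p)))"
    using sum.reindex_bij_betw [OF bij_betw_mult_mod [OF assms], of "\<lambda>j. mult_char r j * add_char p (int j)"]
    by (simp add: dft_def)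
  also have "\<dots> = (\<Sum>j<p. mult_char r k * (mult_char r j * add_char p (int j * int k)))"
  proof (intro sum.cong refl)
    fix j
    have "add_char p (int ((j * k) mod p)) = add_char p (int j * int k)"
      using add_char_mod [OF p_pos, of "int j * int k"] by (simp add: zmod_int)
    then show "mult_char r ((j * k) mod p) * add_char p (int ((j * k) mod p))
        = mult_char r k * (mult_char r j * add_char p (int j * int k))"
      by (simp add: mult_char_mod mult_char_mult)
  qed
  finally show ?thesis by (simp add: dft_def sum_distrib_left)
qed

lemma dft_mult_char_eq:
  assumes "k mod p \<noteq> 0"
  shows "dft p (mult_char r) k = cnj (mult_char r k) * dft p (mult_char r) 1"
  using gauss_sum_scale [OF assms, of r] mult_char_mult_cnj [OF assms, of r]
  by (simp add: mult_ac)

lemma dft_mult_char_0: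
  assumes "\<not> int (p - 1) dvd r"
  shows "dft p (mult_char r) 0 = 0"
  using sum_mult_char [of r] assms by (simp add: dft_def)

lemma norm_gauss_sum:
  assumes "\<not> int (p - 1) dvd r"
  shows "norm (dft p (mult_char r) 1) = sqrt p"
proof -
  have "(\<Sum>k<p. dft p (mult_char r) k * cnj (dft p (mult_char r) k)) = of_nat p * of_nat (p - 1)"
    using dft_inner [OF p_pos, of "mult_char r" "mult_char r"] sum_mult_char [of 0]
    by (simp add: cnj_mult_char mult_char_mult_index)
  moreover have "(\<Sum>k<p. dft p (mult_char r) k * cnj (dft p (mult_char r) k))
      = of_nat (p - 1) * (dft p (mult_char r) 1 * cnj (dft p (mult_char r) 1))"
  proof -
    have "dft p (mult_char r) k * cnj (dft p (mult_char r) k)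
        = dft p (mult_char r) 1 * cnj (dft p (mult_char r) 1)" if "k \<in> {0<..<p}" for k
    proof -
      have "k mod p \<noteq> 0" using that by simp
      then have "dft p (mult_char r) k * cnj (dft p (mult_char r) k)
          = (mult_char r k * cnj (mult_char r k)) * (dft p (mult_char r) 1 * cnj (dft p (mult_char r) 1))"
        unfolding dft_mult_char_eq [OF \<open>k mod p \<noteq> 0\<close>] by (simp add: mult_ac)
      then show ?thesis
        using mult_char_mult_cnj [OF \<open>k mod p \<noteq> 0\<close>] by simp
    qed
    then have "(\<Sum>k\<in>{0<..<p}. dft p (mult_char r) k * cnj (dft p (mult_char r) k))
        = (\<Sum>k\<in>{0<..<p}. dft p (mult_char r) 1 * cnj (dft p (mult_char r) 1))"
      by (rule sum.cong [OF refl])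
    then show ?thesis
      using sum_lessThan_eq_0_plus [OF p_pos, of "\<lambda>k. dft p (mult_char r) k * cnj (dft p (mult_char r) k)"]
        dft_mult_char_0 [OF assms] p_gt_1 by simp
  qed
  ultimately have "dft p (mult_char r) 1 * cnj (dft p (mult_char r) 1) = of_nat p"
    using p_gt_1 by simp
  then have "(norm (dft p (mult_char r) 1))\<^sup>2 = real p"
    by (metis complex_norm_square of_real_eq_iff of_real_of_nat_eq)
  then show ?thesis
    by (simp add: real_sqrt_unique)
qed

lemma norm_dft_mult_char_le:
  assumes "\<not> int (p - 1) dvd r"
  shows "norm (dft p (mult_char r) k) \<le> sqrt p"
proof (cases "k mod p = 0")
  case True
  then show ?thesis
    using dft_mod [OF p_pos, of "mult_char r" k] dft_mult_char_0 [OF assms] by simp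
next
  case False
  then show ?thesis
    unfolding dft_mult_char_eq [OF False] norm_mult complex_mod_cnj norm_mult_char [OF False]
      norm_gauss_sum [OF assms] by simp
qed

lemma dft_principal_char:
  assumes "k < p"
  shows "dft p (mult_char 0) k = (if k = 0 then of_nat (p - 1) else - 1)"
proof -
  have "dft p (mult_char 0) k + add_char p 0 = (\<Sum>l<p. add_char p (int k * int l))"
    using sum_lessThan_eq_0_plus [OF p_pos, of "\<lambda>l. add_char p (int k * int l)"]
      sum_lessThan_eq_0_plus [OF p_pos, of "\<lambda>l. mult_char 0 l * add_char p (int l * int k)"]
    by (simp add: dft_def mult_char_0_index mult.commute)
  also have "\<dots> = (if k = 0 then of_nat p else 0)"
    using assms p_pos by (simp add: sum_add_char int_dvd_diff_iff_eq [of 0 p k, simplified])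
  finally have "dft p (mult_char 0) k = (if k = 0 then of_nat p else 0) - 1"
    by (simp add: eq_diff_eq)
  then show ?thesis
    using p_gt_1 by (simp add: of_nat_diff)
qed

end

section \<open>A flat spectrum for primes p = 1 mod 4\<close>

(* Abstract form of legendre_times_pert(_square) below: X is the Legendre symbol, A and B are the
   characters of index 1 and -1, Z is the principal character. *)
lemma times_linear_perturbation:
  fixes A B X Z P Q c :: "'a :: field"
  assumes "X * A = P" "X * B = Q" "X * X = Z" "Z * A = A" "Z * B = B"
  shows "X * ((A - B) * (1 - X) / c) = (P - A - Q + B) / c"
proof -
  have "X * ((A - B) * (1 - X)) = X * A - X * B - (X * X) * A + (X * X) * B"
    by (simp add: algebra_simps)
  also have "\<dots> = P - A - Q + B"
    by (simp only: assms) simp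
  finally have expand: "X * ((A - B) * (1 - X)) = P - A - Q + B" .
  show ?thesis
    by (simp only: times_divide_eq_right expand)
qed

lemma times_quadratic_perturbation:
  fixes A B X Z P2 M2 XP XM c :: "'a :: field"
  assumes "A * A = P2" "B * B = M2" "A * B = Z" "X * X = Z" "Z * X = X"
    "P2 * X = XP" "M2 * X = XM" "P2 * Z = P2" "M2 * Z = M2" "Z * Z = Z"
  shows "X * ((A - B) * (1 - X) / c)\<^sup>2 = 2 * (XP - P2 - 2 * X + 2 * Z + XM - M2) / c\<^sup>2"
proof -
  have square: "(A - B)\<^sup>2 = P2 - 2 * Z + M2"
  proof -
    have "(A - B)\<^sup>2 = A * A - 2 * (A * B) + B * B"
      by (simp add: power2_eq_square algebra_simps)
    then show ?thesis
      by (simp only: assms(1-3))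
  qed
  have one_minus: "X * (1 - X)\<^sup>2 = 2 * X - 2 * Z"
  proof -
    have "X * (1 - X)\<^sup>2 = X - 2 * (X * X) + (X * X) * X"
      by (simp add: power2_eq_square algebra_simps)
    then show ?thesis
      by (simp only: assms(4,5)) (simp add: algebra_simps)
  qed
  have "X * ((A - B) * (1 - X))\<^sup>2 = (A - B)\<^sup>2 * (X * (1 - X)\<^sup>2)"
    by (simp add: power_mult_distrib mult_ac)
  also have "\<dots> = (P2 - 2 * Z + M2) * (2 * X - 2 * Z)"
    by (simp only: square one_minus)
  also have "\<dots> = 2 * ((P2 * X) - (P2 * Z) - 2 * (Z * X) + 2 * (Z * Z) + (M2 * X) - (M2 * Z))"
    by (simp add: algebra_simps)
  also have "\<dots> = 2 * (XP - P2 - 2 * X + 2 * Z + XM - M2)"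
    by (simp only: assms(5-10))
  finally have expand: "X * ((A - B) * (1 - X))\<^sup>2 = 2 * (XP - P2 - 2 * X + 2 * Z + XM - M2)" .
  show ?thesis
    by (simp only: power_divide times_divide_eq_right expand)
qed

(* p > 5 keeps the character indices half +- 1, half +- 2 used below non-principal. *)
locale prime_1_mod_4 = prime_primroot +
  assumes p_mod_4: "p mod 4 = 1" and p_gt_5: "p > 5"
begin

definition half :: int where
  "half = int ((p - 1) div 2)"

lemma p_minus_1_eq: "int (p - 1) = 2 * half"
proof -
  have "p - 1 = 2 * ((p - 1) div 2)"
    using p_mod_4 by presburger
  then have "int (p - 1) = int (2 * ((p - 1) div 2))"
    by (rule arg_cong)
  then show ?thesis
    by (simp only: half_def of_nat_mult of_nat_numeral)
qed

lemma even_half: "even half"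
proof -
  have "even ((p - 1) div 2)"
    using p_mod_4 p_gt_5 by presburger
  then show ?thesis
    unfolding half_def by simp
qed

lemma half_ge_3: "half \<ge> 3"
proof -
  have "(p - 1) div 2 \<ge> 3"
    using p_gt_5 p_mod_4 by presburger
  then show ?thesis
    unfolding half_def by simp
qed

lemma p_gt_2: "p > 2"
  using p_gt_5 by simp

lemma nontrivial_index:
  assumes "r \<noteq> 0" and "\<bar>r\<bar> \<le> half + 2"
  shows "\<not> int (p - 1) dvd r"
proof
  assume "int (p - 1) dvd r"
  then have "\<bar>int (p - 1)\<bar> \<le> \<bar>r\<bar>"
    by (rule dvd_imp_le_int [OF assms(1)])
  with assms(2) half_ge_3 show False
    unfolding p_minus_1_eq by simp
qed

lemma mult_char_index_add_p_minus_1: "mult_char (r + 2 * half) l = mult_char r l"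
  by (rule mult_char_index_cong) (use p_minus_1_eq in simp)

lemma mult_char_neg_even: "even r \<Longrightarrow> l \<le> p \<Longrightarrow> mult_char r ((p - l) mod p) = mult_char r l"
  using mult_char_neg mult_char_minus_one [OF p_gt_2] by simp

lemma mult_char_neg_odd: "odd r \<Longrightarrow> l \<le> p \<Longrightarrow> mult_char r ((p - l) mod p) = - mult_char r l"
  using mult_char_neg mult_char_minus_one [OF p_gt_2] by simp

lemma mult_char_uminus_half: "mult_char (- half) l = mult_char half l"
  using mult_char_index_add_p_minus_1 [of "- half" l] by simp

lemma cnj_legendre: "cnj (mult_char half l) = mult_char half l"
  by (simp add: cnj_mult_char mult_char_uminus_half)

lemma cnj_legendre_gauss_sum: "cnj (dft p (mult_char half) 1) = dft p (mult_char half) 1"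
proof -
  have "(p - 1) mod p \<noteq> 0"
    using p_gt_1 by simp
  then have "dft p (mult_char half) 1 = mult_char half (p - 1) * dft p (mult_char half) (p - 1)"
    by (rule gauss_sum_scale)
  also have "mult_char half (p - 1) = 1"
    using mult_char_minus_one [OF p_gt_2] even_half by simp
  also have "dft p (mult_char half) (p - 1) = (\<Sum>j<p. mult_char half j * add_char p (- int j))"
  proof -
    have neg: "add_char p (int j * int (p - 1)) = add_char p (- int j)" for j
    proof (rule add_char_cong [OF p_pos])
      have "int j * int (p - 1) = - int j + int p * int j"
        using p_gt_1 by (simp add: of_nat_diff algebra_simps)
      then show "int j * int (p - 1) mod int p = - int j mod int p"
        by (simp only: mod_mult_self2)
    qed
    show ?thesis
      unfolding dft_def neg ..
  qed
  also have "\<dots> = cnj (dft p (mult_char half) 1)"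
    by (simp add: dft_def cnj_add_char cnj_legendre)
  finally show ?thesis
    unfolding mult_1 by (rule sym)
qed

definition gauss_sign :: real where
  "gauss_sign = Re (dft p (mult_char half) 1) / sqrt p"

lemma legendre_gauss_sum_eq: "dft p (mult_char half) 1 = of_real (gauss_sign * sqrt p)"
proof -
  have "Im (dft p (mult_char half) 1) = 0"
    using cnj_legendre_gauss_sum by (simp add: complex_eq_iff)
  then show ?thesis
    using p_pos by (simp add: gauss_sign_def complex_eq_iff)
qed

lemma abs_gauss_sign: "\<bar>gauss_sign\<bar> = 1"
proof -
  have "norm (dft p (mult_char half) 1) = sqrt p"
    using half_ge_3 by (intro norm_gauss_sum nontrivial_index) auto
  then have "\<bar>gauss_sign * sqrt p\<bar> = sqrt p"
    by (simp only: legendre_gauss_sum_eq norm_of_real)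
  then show ?thesis
    using p_pos by (simp add: abs_mult)
qed

lemma gauss_sign_square: "gauss_sign * gauss_sign = 1"
proof -
  have "gauss_sign * gauss_sign = \<bar>gauss_sign\<bar> * \<bar>gauss_sign\<bar>"
    by (rule abs_mult_self_eq [symmetric])
  then show ?thesis by (simp add: abs_gauss_sign)
qed

(* pert l = sin (2 pi dlog l / (p - 1)) on quadratic non-residues and 0 on residues: a real odd
   function whose products with the Legendre symbol are short combinations of characters. *)

definition pert :: "nat \<Rightarrow> complex" where
  "pert l = (mult_char 1 l - mult_char (- 1) l) * (1 - mult_char half l) / (4 * \<i>)"

definition pert_re :: "nat \<Rightarrow> real" where
  "pert_re l = Re (pert l)"

(* Chosen so that the second-order contribution beta^2 (p - 1) / 8 to p * c_0 is about sqrt p. *)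
definition beta :: real where
  "beta = sqrt 8 / sqrt (sqrt p)"

definition spectrum :: "nat \<Rightarrow> complex" where
  "spectrum l = (if l = 0 then 1 else of_real gauss_sign * mult_char half l * cis (beta * pert_re l))"

lemma of_real_pert_re: "complex_of_real (pert_re l) = pert l"
proof -
  have "cnj (pert l) = (mult_char (- 1) l - mult_char 1 l) * (1 - mult_char half l) / (- (4 * \<i>))"
    by (simp add: pert_def cnj_mult_char mult_char_uminus_half)
  also have "\<dots> = pert l"
    by (simp add: pert_def field_simps)
  finally show ?thesis
    by (simp add: pert_re_def complex_eq_iff)
qed

lemma abs_pert_re_le_1: "\<bar>pert_re l\<bar> \<le> 1"
proof -
  have "norm (mult_char 1 l - mult_char (- 1) l) \<le> 2"
    using norm_triangle_ineq4 [of "mult_char 1 l" "mult_char (- 1) l"]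
      norm_mult_char_le [of 1 l] norm_mult_char_le [of "- 1" l] by linarith
  moreover have "norm (1 - mult_char half l) \<le> 2"
    using norm_triangle_ineq4 [of 1 "mult_char half l"] norm_mult_char_le [of half l] by simp
  ultimately have "norm (mult_char 1 l - mult_char (- 1) l) * norm (1 - mult_char half l) / 4 \<le> 2 * 2 / 4"
    by (intro divide_right_mono mult_mono) auto
  then have "norm (pert l) \<le> 1"
    by (simp add: pert_def norm_mult norm_divide)
  then show ?thesis
    by (metis of_real_pert_re norm_of_real)
qed

lemma pert_neg: "l \<le> p \<Longrightarrow> pert ((p - l) mod p) = - pert l"
  by (simp add: pert_def mult_char_neg_odd mult_char_neg_even even_half)
    (simp add: minus_divide_left algebra_simps)

lemma pert_re_neg: "l \<le> p \<Longrightarrow> pert_re ((p - l) mod p) = - pert_re l"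
  by (simp add: pert_re_def pert_neg)

lemma norm_spectrum: "norm (spectrum l) = 1" if "l < p"
proof (cases "l = 0")
  case False
  then have "l mod p \<noteq> 0"
    using that by simp
  then show ?thesis
    using abs_gauss_sign by (simp add: spectrum_def norm_mult norm_mult_char)
qed (simp add: spectrum_def)

lemma conj_symmetric_spectrum: "conj_symmetric p spectrum"
  unfolding conj_symmetric_def
proof (intro allI impI)
  fix l assume "l < p"
  show "spectrum ((p - l) mod p) = cnj (spectrum l)"
  proof (cases "l = 0")
    case False
    then have "(p - l) mod p \<noteq> 0"
      using \<open>l < p\<close> by simp
    then have "spectrum ((p - l) mod p)
        = of_real gauss_sign * mult_char half ((p - l) mod p) * cis (beta * pert_re ((p - l) mod p))"
      by (simp add: spectrum_def del: mod_less)
    also have "\<dots> = of_real gauss_sign * mult_char half l * cis (- (beta * pert_re l))"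
      using \<open>l < p\<close> by (simp add: mult_char_neg_even even_half pert_re_neg)
    also have "\<dots> = cnj (spectrum l)"
      using False by (simp add: spectrum_def cis_cnj cnj_legendre)
    finally show ?thesis .
  qed (simp add: spectrum_def)
qed

lemma mult_char_twice_half: "mult_char (2 * half) l = mult_char 0 l"
  using mult_char_index_add_p_minus_1 [of 0 l] by simp

lemma legendre_times_pert:
  "mult_char half l * pert l
   = (mult_char (half + 1) l - mult_char 1 l - mult_char (half - 1) l + mult_char (- 1) l) / (4 * \<i>)"
  unfolding pert_def
  by (rule times_linear_perturbation [where Z = "mult_char 0 l"])
    (simp_all add: mult_char_mult_index mult_char_twice_half)

lemma legendre_times_pert_square:
  "mult_char half l * (pert l)\<^sup>2
   = - (mult_char (half + 2) l - mult_char 2 l - 2 * mult_char half l + 2 * mult_char 0 l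
        + mult_char (half - 2) l - mult_char (- 2) l) / 8"
proof -
  have "mult_char half l * (pert l)\<^sup>2
      = 2 * (mult_char (half + 2) l - mult_char 2 l - 2 * mult_char half l + 2 * mult_char 0 l
             + mult_char (half - 2) l - mult_char (- 2) l) / (4 * \<i>)\<^sup>2"
    unfolding pert_def
    by (rule times_quadratic_perturbation [where Z = "mult_char 0 l"])
      (simp_all add: mult_char_mult_index mult_char_twice_half add.commute)
  moreover have "2 * E / (4 * \<i>)\<^sup>2 = - E / 8" for E :: complex
    by (simp add: power2_eq_square field_simps)
  ultimately show ?thesis
    by (simp only:)
qed

lemma norm_dft_mult_char_small_index:
  assumes "r \<noteq> 0" and "\<bar>r\<bar> \<le> half + 2"
  shows "norm (dft p (mult_char r) k) \<le> sqrt p"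
  using assms by (intro norm_dft_mult_char_le nontrivial_index)

lemma beta_nonneg: "beta \<ge> 0"
  by (simp add: beta_def)

lemma beta_square: "beta\<^sup>2 = 8 / sqrt p"
  by (simp add: beta_def power_divide)

definition taylor_rem :: "nat \<Rightarrow> complex" where
  "taylor_rem l = cis (beta * pert_re l) - (1 + \<i> * of_real (beta * pert_re l) - (of_real (beta * pert_re l))\<^sup>2 / 2)"

lemma norm_taylor_rem: "norm (taylor_rem l) \<le> beta ^ 3 / 6"
proof -
  have "norm (taylor_rem l) \<le> \<bar>beta * pert_re l\<bar> ^ 3 / 6"
    unfolding taylor_rem_def by (rule norm_cis_minus_taylor_2)
  also have "\<bar>beta * pert_re l\<bar> ^ 3 \<le> beta ^ 3"
    using abs_pert_re_le_1 [of l] beta_nonneg by (intro power_mono) (auto simp: abs_mult mult_left_le)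
  finally show ?thesis by simp
qed

lemma legendre_times_spectrum_phase:
  "mult_char half l * cis (beta * pert_re l)
   = mult_char half l + \<i> * of_real beta * (mult_char half l * pert l)
     - of_real (beta\<^sup>2 / 2) * (mult_char half l * (pert l)\<^sup>2) + mult_char half l * taylor_rem l"
proof -
  have scaled_pert: "complex_of_real (beta * pert_re l) = of_real beta * pert l"
    by (simp add: of_real_pert_re)
  have expand: "cis (beta * pert_re l)
      = 1 + \<i> * (of_real beta * pert l) - (of_real beta * pert l)\<^sup>2 / 2 + taylor_rem l"
    unfolding taylor_rem_def scaled_pert by simp
  show ?thesis
    unfolding expand by (simp add: algebra_simps power_mult_distrib)
qed

lemma dft_spectrum_expansion:
  "dft p spectrum k
   = 1 + of_real gauss_sign *
       (dft p (mult_char half) k + \<i> * of_real beta * dft p (\<lambda>l. mult_char half l * pert l) k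
        - of_real (beta\<^sup>2 / 2) * dft p (\<lambda>l. mult_char half l * (pert l)\<^sup>2) k
        + dft p (\<lambda>l. mult_char half l * taylor_rem l) k)"
proof -
  have "dft p spectrum k
      = 1 + (\<Sum>l\<in>{0<..<p}. of_real gauss_sign * (mult_char half l * cis (beta * pert_re l) * add_char p (int l * int k)))"
    using sum_lessThan_eq_0_plus [OF p_pos, of "\<lambda>l. spectrum l * add_char p (int l * int k)"]
    by (simp add: dft_def spectrum_def mult_ac)
  also have "\<dots> = 1 + of_real gauss_sign * dft p (\<lambda>l. mult_char half l * cis (beta * pert_re l)) k"
    using sum_lessThan_eq_0_plus [OF p_pos, of "\<lambda>l. mult_char half l * cis (beta * pert_re l) * add_char p (int l * int k)"]
    by (simp add: dft_def sum_distrib_left mult_char_eq_0)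
  finally show ?thesis
    unfolding legendre_times_spectrum_phase by (simp only: dft_add dft_diff dft_cmult)
qed

lemma norm_dft_legendre_pert: "norm (dft p (\<lambda>l. mult_char half l * pert l) k) \<le> sqrt p"
proof -
  define T where "T r = dft p (mult_char r) k" for r
  have bound: "norm (T r) \<le> sqrt p" if "r \<in> {half + 1, 1, half - 1, - 1}" for r
    unfolding T_def using that half_ge_3 by (intro norm_dft_mult_char_small_index) auto
  have "dft p (\<lambda>l. mult_char half l * pert l) k
      = (T (half + 1) - T 1 - T (half - 1) + T (- 1)) / (4 * \<i>)"
    unfolding legendre_times_pert T_def by (simp only: dft_divide dft_add dft_diff)
  moreover have "norm (T (half + 1) - T 1 - T (half - 1) + T (- 1)) \<le> 4 * sqrt p"
    using norm_triangle_ineq [of "T (half + 1) - T 1 - T (half - 1)" "T (- 1)"]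
      norm_triangle_ineq4 [of "T (half + 1) - T 1" "T (half - 1)"]
      norm_triangle_ineq4 [of "T (half + 1)" "T 1"] bound [of "half + 1"] bound [of 1]
      bound [of "half - 1"] bound [of "- 1"]
    by simp
  ultimately show ?thesis
    by (simp add: norm_divide norm_mult)
qed

lemma dft_legendre_pert_square_0:
  "dft p (\<lambda>l. mult_char half l * (pert l)\<^sup>2) 0 = - of_nat (p - 1) / 4"
proof -
  have "dft p (mult_char r) 0 = 0" if "r \<in> {half + 2, 2, half, half - 2, - 2}" for r
    using that half_ge_3 by (intro dft_mult_char_0 nontrivial_index) auto
  then show ?thesis
    unfolding legendre_times_pert_square
    by (simp only: dft_divide dft_uminus dft_add dft_diff dft_cmult dft_principal_char [OF p_pos])
      simp
qed

lemma norm_dft_legendre_pert_square: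
  assumes "0 < k" and "k < p"
  shows "norm (dft p (\<lambda>l. mult_char half l * (pert l)\<^sup>2) k) \<le> (6 * sqrt p + 2) / 8"
proof -
  define T where "T r = dft p (mult_char r) k" for r
  have bound: "norm (T r) \<le> sqrt p" if "r \<in> {half + 2, 2, half, half - 2, - 2}" for r
    unfolding T_def using that half_ge_3 by (intro norm_dft_mult_char_small_index) auto
  define S where "S = T (half + 2) - T 2 - 2 * T half + 2 * (- 1) + T (half - 2) - T (- 2)"
  have "dft p (\<lambda>l. mult_char half l * (pert l)\<^sup>2) k = - S / 8"
    unfolding legendre_times_pert_square S_def T_def
    using assms dft_principal_char [OF assms(2)]
    by (simp only: dft_divide dft_uminus dft_add dft_diff dft_cmult) simp
  moreover have "norm S \<le> 6 * sqrt p + 2"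
    unfolding S_def
    using norm_triangle_ineq4 [of "T (half + 2) - T 2 - 2 * T half + 2 * (- 1) + T (half - 2)" "T (- 2)"]
      norm_triangle_ineq [of "T (half + 2) - T 2 - 2 * T half + 2 * (- 1)" "T (half - 2)"]
      norm_triangle_ineq [of "T (half + 2) - T 2 - 2 * T half" "2 * (- 1)"]
      norm_triangle_ineq4 [of "T (half + 2) - T 2" "2 * T half"]
      norm_triangle_ineq4 [of "T (half + 2)" "T 2"]
      bound [of "half + 2"] bound [of 2] bound [of half] bound [of "half - 2"] bound [of "- 2"]
    by (simp add: norm_mult)
  ultimately show ?thesis
    by (simp add: norm_divide)
qed

lemma norm_dft_legendre_taylor_rem:
  "norm (dft p (\<lambda>l. mult_char half l * taylor_rem l) k) \<le> real p * (beta ^ 3 / 6)"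
proof (rule norm_dft_le)
  fix l
  have "norm (mult_char half l) * norm (taylor_rem l) \<le> 1 * (beta ^ 3 / 6)"
    using norm_mult_char_le norm_taylor_rem by (intro mult_mono) auto
  then show "norm (mult_char half l * taylor_rem l) \<le> beta ^ 3 / 6"
    by (simp add: norm_mult)
qed

lemma legendre_dft_0: "dft p (mult_char half) 0 = 0"
  using half_ge_3 by (intro dft_mult_char_0 nontrivial_index) auto

lemma dft_spectrum_0_estimate:
  "norm (dft p spectrum 0 - of_real gauss_sign * of_real (sqrt p))
   \<le> 1 + 1 / sqrt p + beta * sqrt p + real p * (beta ^ 3 / 6)"
proof -
  define A where "A = \<i> * of_real beta * dft p (\<lambda>l. mult_char half l * pert l) 0"
  define C where "C = dft p (\<lambda>l. mult_char half l * taylor_rem l) 0"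
  define X where "X = complex_of_real (gauss_sign * (1 / sqrt p))"
  have "beta\<^sup>2 / 2 * (real (p - 1) / 4) = sqrt p - 1 / sqrt p"
  proof -
    have "real (p - 1) = sqrt p * sqrt p - 1"
      using p_pos by (simp add: of_nat_diff)
    then show ?thesis
      using p_pos by (simp add: beta_square field_simps)
  qed
  moreover have "of_real (beta\<^sup>2 / 2) * dft p (\<lambda>l. mult_char half l * (pert l)\<^sup>2) 0
      = - of_real (beta\<^sup>2 / 2 * (real (p - 1) / 4))"
    unfolding dft_legendre_pert_square_0 by simp
  ultimately have second_order: "of_real (beta\<^sup>2 / 2) * dft p (\<lambda>l. mult_char half l * (pert l)\<^sup>2) 0
      = - of_real (sqrt p - 1 / sqrt p)"
    by (simp only:)
  have "dft p spectrum 0 - of_real gauss_sign * of_real (sqrt p) = 1 - X + of_real gauss_sign * (A + C)"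
    unfolding dft_spectrum_expansion [of 0] second_order legendre_dft_0 A_def C_def X_def
    by (simp add: algebra_simps)
  moreover have "norm A \<le> beta * sqrt p"
    using norm_dft_legendre_pert [of 0] beta_nonneg by (simp add: A_def norm_mult mult_left_mono)
  moreover have "norm C \<le> real p * (beta ^ 3 / 6)"
    unfolding C_def by (rule norm_dft_legendre_taylor_rem)
  moreover have "norm X = 1 / sqrt p"
    unfolding X_def by (simp only: norm_of_real) (simp add: abs_mult abs_gauss_sign)
  moreover have "norm (1 - X + of_real gauss_sign * (A + C)) \<le> 1 + norm X + (norm A + norm C)"
    using norm_triangle_ineq [of "1 - X" "of_real gauss_sign * (A + C)"]
      norm_triangle_ineq4 [of 1 X] norm_triangle_ineq [of A C] abs_gauss_sign
    by (simp add: norm_mult)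
  ultimately show ?thesis
    by simp
qed

lemma dft_spectrum_estimate:
  assumes "0 < k" and "k < p"
  shows "norm (dft p spectrum k - mult_char half k * of_real (sqrt p))
    \<le> 1 + beta * sqrt p + beta\<^sup>2 / 2 * ((6 * sqrt p + 2) / 8) + real p * (beta ^ 3 / 6)"
proof -
  define A where "A = \<i> * of_real beta * dft p (\<lambda>l. mult_char half l * pert l) k"
  define B where "B = of_real (beta\<^sup>2 / 2) * dft p (\<lambda>l. mult_char half l * (pert l)\<^sup>2) k"
  define C where "C = dft p (\<lambda>l. mult_char half l * taylor_rem l) k"
  have "k mod p \<noteq> 0"
    using assms by simp
  then have "of_real gauss_sign * dft p (mult_char half) k
      = of_real (gauss_sign * gauss_sign) * mult_char half k * of_real (sqrt p)"
    unfolding dft_mult_char_eq [OF \<open>k mod p \<noteq> 0\<close>] legendre_gauss_sum_eq cnj_legendre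
    by (simp add: mult_ac)
  then have "dft p spectrum k - mult_char half k * of_real (sqrt p) = 1 + of_real gauss_sign * (A - B + C)"
    unfolding dft_spectrum_expansion [of k] A_def B_def C_def gauss_sign_square
    by (simp add: algebra_simps)
  moreover have "norm A \<le> beta * sqrt p"
    using norm_dft_legendre_pert [of k] beta_nonneg by (simp add: A_def norm_mult mult_left_mono)
  moreover have "norm B \<le> beta\<^sup>2 / 2 * ((6 * sqrt p + 2) / 8)"
  proof -
    have "norm B = beta\<^sup>2 / 2 * norm (dft p (\<lambda>l. mult_char half l * (pert l)\<^sup>2) k)"
      unfolding B_def by (simp only: norm_mult norm_of_real) simp
    also have "\<dots> \<le> beta\<^sup>2 / 2 * ((6 * sqrt p + 2) / 8)"
      by (rule mult_left_mono [OF norm_dft_legendre_pert_square [OF assms]]) simp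
    finally show ?thesis .
  qed
  moreover have "norm C \<le> real p * (beta ^ 3 / 6)"
    unfolding C_def by (rule norm_dft_legendre_taylor_rem)
  moreover have "norm (1 + of_real gauss_sign * (A - B + C)) \<le> 1 + (norm A + norm B + norm C)"
    using norm_triangle_ineq [of 1 "of_real gauss_sign * (A - B + C)"]
      norm_triangle_ineq [of "A - B" C] norm_triangle_ineq4 [of A B] abs_gauss_sign
    by (simp add: norm_mult)
  ultimately show ?thesis
    by simp
qed

lemma estimate_error_le:
  "1 + 1 / sqrt p + beta * sqrt p + beta\<^sup>2 / 2 * ((6 * sqrt p + 2) / 8) + real p * (beta ^ 3 / 6)
   \<le> 13 * sqrt (sqrt p)"
proof -
  define q where "q = sqrt (sqrt p)"
  have "q \<ge> 1"
    using p_pos by (simp add: q_def)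
  have sqrt_p: "sqrt p = q * q" and p: "real p = (q * q) * (q * q)" and beta: "beta = sqrt 8 / q"
    by (simp_all add: q_def beta_def)
  have "sqrt (8 :: real) \<le> sqrt ((283 / 100)\<^sup>2)"
    by (subst real_sqrt_le_iff) (simp add: power2_eq_square)
  then have sqrt_8: "sqrt 8 * sqrt 8 = (8 :: real)" "sqrt (8 :: real) \<le> 283 / 100"
    by simp_all
  have "beta * sqrt p = sqrt 8 * q"
    using \<open>q \<ge> 1\<close> by (simp add: sqrt_p beta)
  moreover have "beta\<^sup>2 / 2 * ((6 * sqrt p + 2) / 8) = 3 + 1 / (q * q)"
    using \<open>q \<ge> 1\<close> sqrt_8 by (simp add: sqrt_p beta power2_eq_square field_simps)
  moreover have "real p * (beta ^ 3 / 6) = 8 * sqrt 8 * q / 6"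
  proof -
    have "real p * beta ^ 3 = q * (sqrt 8 * sqrt 8) * sqrt 8"
      using \<open>q \<ge> 1\<close> by (simp add: p beta power3_eq_cube field_simps)
    then show ?thesis using sqrt_8 by simp
  qed
  moreover have "1 / (q * q) \<le> 1"
    using \<open>q \<ge> 1\<close> by (simp add: mult_ge1_I)
  moreover have "sqrt 8 * q \<le> 283 / 100 * q" and "8 * sqrt 8 * q / 6 \<le> 378 / 100 * q"
    using sqrt_8 \<open>q \<ge> 1\<close> by simp_all
  ultimately show ?thesis
    using \<open>q \<ge> 1\<close> unfolding sqrt_p [symmetric] q_def [symmetric] by linarith
qed

lemma norm_dft_spectrum_bounds:
  assumes "k < p"
  shows "sqrt p - 13 * sqrt (sqrt p) \<le> norm (dft p spectrum k)"
    and "norm (dft p spectrum k) \<le> sqrt p + 13 * sqrt (sqrt p)"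
proof -
  obtain u where "norm u = 1" and u: "norm (dft p spectrum k - u * of_real (sqrt p)) \<le> 13 * sqrt (sqrt p)"
  proof (cases "k = 0")
    case True
    show ?thesis
    proof (rule that)
      show "norm (complex_of_real gauss_sign) = 1"
        using abs_gauss_sign by simp
      have "beta\<^sup>2 / 2 * ((6 * sqrt p + 2) / 8) \<ge> 0"
        by simp
      then show "norm (dft p spectrum k - of_real gauss_sign * of_real (sqrt p)) \<le> 13 * sqrt (sqrt p)"
        using dft_spectrum_0_estimate estimate_error_le unfolding True by linarith
    qed
  next
    case False
    then have "k mod p \<noteq> 0" and "0 < k"
      using assms by simp_all
    show ?thesis
    proof (rule that)
      show "norm (mult_char half k) = 1"
        by (rule norm_mult_char [OF \<open>k mod p \<noteq> 0\<close>])
      have "1 / sqrt p \<ge> 0"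
        by simp
      then show "norm (dft p spectrum k - mult_char half k * of_real (sqrt p)) \<le> 13 * sqrt (sqrt p)"
        using dft_spectrum_estimate [OF \<open>0 < k\<close> assms] estimate_error_le by linarith
    qed
  qed
  then have "norm (u * of_real (sqrt p)) = sqrt p"
    by (simp add: norm_mult)
  then show "sqrt p - 13 * sqrt (sqrt p) \<le> norm (dft p spectrum k)"
    and "norm (dft p spectrum k) \<le> sqrt p + 13 * sqrt (sqrt p)"
    using u norm_triangle_ineq2 [of "dft p spectrum k" "u * of_real (sqrt p)"]
      norm_triangle_ineq3 [of "dft p spectrum k" "u * of_real (sqrt p)"]
    by (auto simp: norm_minus_commute)
qed

lemma abs_spectral_circulant_bounds:
  assumes "i < p" and "j < p"
  shows "(1 - 13 / sqrt (sqrt p)) / sqrt p \<le> \<bar>spectral_circulant p spectrum i j\<bar>"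
    and "\<bar>spectral_circulant p spectrum i j\<bar> \<le> (1 + 13 / sqrt (sqrt p)) / sqrt p"
proof -
  define q where "q = sqrt (sqrt p)"
  have "q > 0" and "sqrt p = q * q" and "real p = (q * q) * (q * q)"
    using p_pos by (simp_all add: q_def)
  then have "(1 - 13 / sqrt (sqrt p)) / sqrt p = (sqrt p - 13 * sqrt (sqrt p)) / real p"
    and "(1 + 13 / sqrt (sqrt p)) / sqrt p = (sqrt p + 13 * sqrt (sqrt p)) / real p"
    unfolding q_def [symmetric] by (simp_all add: field_simps)
  moreover have "(j + p - i) mod p < p"
    using p_pos by simp
  ultimately show "(1 - 13 / sqrt (sqrt p)) / sqrt p \<le> \<bar>spectral_circulant p spectrum i j\<bar>"
    and "\<bar>spectral_circulant p spectrum i j\<bar> \<le> (1 + 13 / sqrt (sqrt p)) / sqrt p"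
    using norm_dft_spectrum_bounds [of "(j + p - i) mod p"] p_pos
    by (simp_all add: abs_spectral_circulant [OF p_pos conj_symmetric_spectrum] divide_right_mono)
qed

lemma flat_orthogonal_circulant_exists:
  "\<exists>m. circulant p m \<and> orthogonal_mat p m \<and>
     (\<forall>i<p. \<forall>j<p. (1 - 13 / sqrt (sqrt p)) / sqrt p \<le> \<bar>m i j\<bar>
                  \<and> \<bar>m i j\<bar> \<le> (1 + 13 / sqrt (sqrt p)) / sqrt p)"
  using abs_spectral_circulant_bounds
  by (intro exI [of _ "spectral_circulant p spectrum"])
    (simp add: circulant_spectral_circulant orthogonal_mat_spectral_circulant [OF p_pos norm_spectrum]
      conj_symmetric_spectrum)

end

lemma orthogonal_circulant_trivial_bounds:
  assumes "p > 1"
  shows "\<exists>m. circulant p m \<and> orthogonal_mat p m \<and>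
    (\<forall>i<p. \<forall>j<p. (1 - sqrt p) / sqrt p \<le> \<bar>m i j\<bar> \<and> \<bar>m i j\<bar> \<le> (1 + sqrt p) / sqrt p)"
proof (intro exI [of _ "spectral_circulant p (\<lambda>_. 1)"] conjI allI impI)
  show "circulant p (spectral_circulant p (\<lambda>_. 1))"
    by (rule circulant_spectral_circulant)
  show "orthogonal_mat p (spectral_circulant p (\<lambda>_. 1))"
    using assms by (intro orthogonal_mat_spectral_circulant) (simp_all add: conj_symmetric_def)
  fix i j
  have "(1 - sqrt p) / sqrt p \<le> 0" and "1 \<le> (1 + sqrt p) / sqrt p"
    using assms by (simp_all add: divide_nonpos_pos le_divide_eq)
  moreover have "\<bar>spectral_circulant p (\<lambda>_. 1) i j\<bar> \<le> 1"
    using assms by (intro abs_spectral_circulant_const_1_le) simp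
  ultimately show "(1 - sqrt p) / sqrt p \<le> \<bar>spectral_circulant p (\<lambda>_. 1) i j\<bar>"
    and "\<bar>spectral_circulant p (\<lambda>_. 1) i j\<bar> \<le> (1 + sqrt p) / sqrt p"
    by simp_all
qed

(* p = 5 is too small for the construction; there the identity matrix, with constant spectrum 1,
   is used. *)
definition entry_error :: "nat \<Rightarrow> real" where
  "entry_error p = (if p \<le> 5 then sqrt p else 13 / sqrt (sqrt p))"

lemma entry_error_eventually_small:
  assumes "\<epsilon> > 0"
  shows "\<exists>N. \<forall>p\<ge>N. \<bar>entry_error p\<bar> < \<epsilon>"
proof -
  have "filterlim (\<lambda>n. sqrt (sqrt (real n))) at_top sequentially"
    by (intro filterlim_compose [OF sqrt_at_top] filterlim_real_sequentially)
  then have "(\<lambda>n. 13 / sqrt (sqrt (real n))) \<longlonglongrightarrow> 0"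
    by (intro tendsto_divide_0 [OF tendsto_const] filterlim_at_top_imp_at_infinity)
  moreover have "eventually (\<lambda>n. 13 / sqrt (sqrt (real n)) = entry_error n) sequentially"
    unfolding eventually_sequentially by (auto simp: entry_error_def intro: exI [of _ 6])
  ultimately have "entry_error \<longlonglongrightarrow> 0"
    by (rule Lim_transform_eventually)
  then show ?thesis
    using LIMSEQ_D [OF _ assms] by fastforce
qed

theorem proposition3p2:
  shows "\<exists>\<delta> :: nat \<Rightarrow> real.
     (\<forall>\<epsilon>>0. \<exists>N. \<forall>p. prime p \<and> p \<ge> N \<longrightarrow> \<bar>\<delta> p\<bar> < \<epsilon>) \<and>
     (\<forall>p. prime p \<and> p mod 4 = 1 \<longrightarrow>
        (\<exists>m :: nat \<Rightarrow> nat \<Rightarrow> real. circulant p m \<and> orthogonal_mat p m \<and>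
           (\<forall>i<p. \<forall>j<p.
              (1 - \<delta> p) / sqrt (real p) \<le> \<bar>m i j\<bar> \<and>
              \<bar>m i j\<bar> \<le> (1 + \<delta> p) / sqrt (real p))))"
proof (intro exI [of _ entry_error] conjI allI impI)
  show "\<exists>N. \<forall>p. prime p \<and> p \<ge> N \<longrightarrow> \<bar>entry_error p\<bar> < \<epsilon>" if "\<epsilon> > 0" for \<epsilon>
    using entry_error_eventually_small [OF that] by blast
  fix p :: nat
  assume "prime p \<and> p mod 4 = 1"
  then have "prime p" and "p mod 4 = 1" and "p > 1"
    using prime_gt_1_nat by auto
  show "\<exists>m. circulant p m \<and> orthogonal_mat p m \<and>
      (\<forall>i<p. \<forall>j<p. (1 - entry_error p) / sqrt (real p) \<le> \<bar>m i j\<bar>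
                   \<and> \<bar>m i j\<bar> \<le> (1 + entry_error p) / sqrt (real p))"
  proof (cases "p \<le> 5")
    case True
    then show ?thesis
      using orthogonal_circulant_trivial_bounds [OF \<open>p > 1\<close>] by (simp add: entry_error_def)
  next
    case False
    obtain g where "residue_primroot p g"
      using prime_primitive_root_exists [OF \<open>p > 1\<close> \<open>prime p\<close>] by blast
    then interpret prime_1_mod_4 p g
      using \<open>prime p\<close> \<open>p mod 4 = 1\<close> False by unfold_locales auto
    show ?thesis
      using False flat_orthogonal_circulant_exists by (simp add: entry_error_def)
  qed
qed

end
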